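(* Let $\alpha\in(0,1)$ and let $K\colon\Delta\to\mathbb R$ be a continuous nowhere vanishing function with $K(x,y)=a(x)b(y)$ for some functions $a,b$. Then $I^\alpha_K$ is injective (on integrable functions on $[0,1]$) and $$f(x)=-b(x)^{-1}c_\alpha^{-1}\frac{d}{dx}I^{1-\alpha}_LI^\alpha_Kf(x),$$ where $L(x,y)=1/a(y)$.
   Context: $\Delta=\{(x,y);0\leq x\leq y\leq1\}$. For a kernel $K$ on $\Delta$ and $\beta\in[0,1)$, $I^\beta_Kf(x)=\int_x^1(y-x)^{-\beta}K(x,y)f(y)\,dy$ and $I^\beta_Kf(1)=0$. $c_\alpha=\pi/\sin(\alpha\pi)$. *)

theory Defs
  imports "HOL-Analysis.Analysis"
begin

definition Delta :: "(real \<times> real) set" where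
  "Delta = {(x, y). 0 \<le> x \<and> x \<le> y \<and> y \<le> 1}"

definition frac_int :: "real \<Rightarrow> (real \<Rightarrow> real \<Rightarrow> real) \<Rightarrow> (real \<Rightarrow> real) \<Rightarrow> real \<Rightarrow> real" where
  "frac_int \<beta> K f x =
     (if x = 1 then 0 else integral {x..1} (\<lambda>y. (y - x) powr (- \<beta>) * K x y * f y))"

definition c_const :: "real \<Rightarrow> real" where
  "c_const \<alpha> = pi / sin (\<alpha> * pi)"

end

theory Submission
  imports Defs
begin

text \<open>
  For a separable kernel \<open>K x y = a x * b y\<close> the factor \<open>a\<close> cancels in \<open>I^(1-\<alpha>)_L (I^\<alpha>_K f)\<close>,
  and exchanging the order of integration leaves the Abel kernel \<open>(s - t) powr (\<alpha> - 1) * (y - s) powr -\<alpha>\<close>,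
  whose integral over \<open>t \<le> s \<le> y\<close> is \<open>Beta \<alpha> (1 - \<alpha>) = pi / sin (\<alpha> * pi) = c\<^sub>\<alpha>\<close> for every \<open>y\<close>.
  Hence \<open>I^(1-\<alpha>)_L (I^\<alpha>_K f) t = c\<^sub>\<alpha> * \<integral>\<^sub>t\<^sup>1 b f\<close>, whose derivative is \<open>- c\<^sub>\<alpha> * b x * f x\<close> at almost
  every \<open>x\<close> by Lebesgue's differentiation theorem (obtained from the Vitali covering theorem via
  Lebesgue points); injectivity follows because \<open>b\<close> does not vanish.
\<close>

lemma integral_const_lmeasurable:
  "S \<in> lmeasurable \<Longrightarrow> integral S (\<lambda>x. c) = c * measure lebesgue S"
  using integral_mult_right[of S c "\<lambda>x. 1"] by (simp add: lmeasure_integral)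

lemma absolutely_integrable_truncation_error:
  fixes g :: "'a::euclidean_space \<Rightarrow> real"
  assumes g: "g absolutely_integrable_on UNIV"
  shows "(\<lambda>x. \<bar>g x\<bar> - min \<bar>g x\<bar> (real k)) absolutely_integrable_on UNIV"
proof -
  have "g \<in> borel_measurable lebesgue"
    using absolutely_integrable_imp_borel_measurable[OF g] by simp
  then have "(\<lambda>x. \<bar>g x\<bar> - min \<bar>g x\<bar> (real k)) \<in> borel_measurable lebesgue"
    by measurable
  moreover have "(\<lambda>x. \<bar>g x\<bar>) integrable_on UNIV"
    using g by (simp add: absolutely_integrable_on_def)
  moreover have "norm (\<bar>g x\<bar> - min \<bar>g x\<bar> (real k)) \<le> \<bar>g x\<bar>" for x
    by auto
  ultimately show ?thesis
    by (intro measurable_bounded_by_integrable_imp_absolutely_integrable) auto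
qed

lemma integral_truncation_error_tendsto_0:
  fixes g :: "'a::euclidean_space \<Rightarrow> real"
  assumes g: "g absolutely_integrable_on UNIV"
  shows "(\<lambda>k. integral UNIV (\<lambda>x. \<bar>g x\<bar> - min \<bar>g x\<bar> (real k))) \<longlonglongrightarrow> 0"
proof -
  have "(\<lambda>k. integral UNIV (\<lambda>x. \<bar>g x\<bar> - min \<bar>g x\<bar> (real k))) \<longlonglongrightarrow> integral UNIV (\<lambda>x::'a. 0::real)"
  proof (rule Equivalence_Lebesgue_Henstock_Integration.dominated_convergence(2)
      [where h = "\<lambda>x. \<bar>g x\<bar>" and g = "\<lambda>x. 0"])
    show "(\<lambda>k. \<bar>g x\<bar> - min \<bar>g x\<bar> (real k)) \<longlonglongrightarrow> 0" for x
    proof (rule tendsto_eventually)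
      obtain N :: nat where "\<bar>g x\<bar> \<le> N" using real_arch_simple by blast
      then show "\<forall>\<^sub>F k in sequentially. \<bar>g x\<bar> - min \<bar>g x\<bar> (real k) = 0"
        by (auto simp: eventually_sequentially intro!: exI[of _ N])
    qed
  qed (use absolutely_integrable_truncation_error[OF g] g in \<open>auto simp: absolutely_integrable_on_def\<close>)
  then show ?thesis by simp
qed

lemma absolutely_integrable_small_measure:
  fixes g :: "'a::euclidean_space \<Rightarrow> real"
  assumes g: "g absolutely_integrable_on UNIV" and e: "e > 0"
  obtains d where "d > 0"
    "\<And>A. A \<in> lmeasurable \<Longrightarrow> measure lebesgue A < d \<Longrightarrow> integral A (\<lambda>x. \<bar>g x\<bar>) < e"
proof -
  define h where "h k x = \<bar>g x\<bar> - min \<bar>g x\<bar> (real k)" for k x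
  have h: "h k absolutely_integrable_on UNIV" for k
    unfolding h_def by (rule absolutely_integrable_truncation_error[OF g])
  have "\<forall>\<^sub>F k in sequentially. integral UNIV (h k) < e/2"
    using order_tendstoD(2)[OF integral_truncation_error_tendsto_0[OF g], of "e/2"] e
    unfolding h_def by simp
  then obtain N where N: "integral UNIV (h N) < e/2"
    by (meson eventually_sequentially order_refl)
  show ?thesis
  proof (rule that[of "e / (2 * (real N + 1))"])
    show "e / (2 * (real N + 1)) > 0" using e by simp
    fix A :: "'a set" assume A: "A \<in> lmeasurable" "measure lebesgue A < e / (2 * (real N + 1))"
    have hA: "h N integrable_on A"
      using set_integrable_subset[OF h] A by (auto simp: absolutely_integrable_on_def)
    have mA: "(\<lambda>x. min \<bar>g x\<bar> (real N)) integrable_on A"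
    proof -
      have "(\<lambda>x. \<bar>g x\<bar> - h N x) absolutely_integrable_on A"
        using set_integrable_subset[OF g] set_integrable_subset[OF h] A
        by (intro set_integral_diff set_integrable_abs) auto
      then show ?thesis by (simp add: h_def absolutely_integrable_on_def)
    qed
    have "integral A (\<lambda>x. \<bar>g x\<bar>) = integral A (h N) + integral A (\<lambda>x. min \<bar>g x\<bar> (real N))"
      using integral_add[OF hA mA] by (simp add: h_def)
    also have "integral A (h N) \<le> integral UNIV (h N)"
      by (rule integral_subset_le) (use hA h in \<open>auto simp: h_def absolutely_integrable_on_def\<close>)
    also have "integral A (\<lambda>x. min \<bar>g x\<bar> (real N)) \<le> integral A (\<lambda>x. real N)"
      by (rule integral_le) (use mA A integrable_on_const in auto)
    also have "integral A (\<lambda>x. real N) = real N * measure lebesgue A"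
      using A(1) by (rule integral_const_lmeasurable)
    also have "real N * measure lebesgue A \<le> real N * (e / (2 * (real N + 1)))"
      using A by (intro mult_left_mono) auto
    also have "real N * (e / (2 * (real N + 1))) < e/2"
      using e by (simp add: field_simps)
    finally show "integral A (\<lambda>x. \<bar>g x\<bar>) < e" using N by linarith
  qed
qed

lemma measure_countable_Union_le:
  assumes "countable \<D>" "\<And>D. D \<in> \<D> \<Longrightarrow> D \<in> lmeasurable"
    and finite_le: "\<And>\<F>. \<F> \<subseteq> \<D> \<Longrightarrow> finite \<F> \<Longrightarrow> measure lebesgue (\<Union>\<F>) \<le> e"
  shows "measure lebesgue (\<Union>\<D>) \<le> e"
proof (rule field_le_epsilon)
  fix \<epsilon> :: real assume "\<epsilon> > 0"
  then obtain \<F> where "\<F> \<subseteq> \<D>" "finite \<F>" "measure lebesgue (\<Union>\<D>) - \<epsilon> < measure lebesgue (\<Union>\<F>)"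
    by (rule measure_countable_Union_approachable[OF assms(1) _ assms(2) finite_le])
  then show "measure lebesgue (\<Union>\<D>) \<le> e + \<epsilon>"
    using finite_le[of \<F>] by linarith
qed

lemma outer_measure_le_negligible_diff:
  assumes "negligible (S - T)" "T \<in> lmeasurable"
  shows "S \<subseteq> (S - T) \<union> T" "(S - T) \<union> T \<in> lmeasurable" "measure lebesgue ((S - T) \<union> T) \<le> measure lebesgue T"
proof -
  have ST: "S - T \<in> lmeasurable" "measure lebesgue (S - T) = 0"
    using assms(1) negligible_imp_measurable negligible_imp_measure0 by auto
  show "(S - T) \<union> T \<in> lmeasurable"
    using ST(1) assms(2) by (rule fmeasurable.Un)
  have "measure lebesgue ((S - T) \<union> T) \<le> measure lebesgue (S - T) + measure lebesgue T"
    by (rule measure_Un_le) (use ST(1) assms(2) in auto)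
  then show "measure lebesgue ((S - T) \<union> T) \<le> measure lebesgue T"
    using ST(2) by linarith
qed auto

lemma Vitali_outer_measure_le:
  fixes S B :: "'a::euclidean_space set"
  assumes fine: "\<And>x d. x \<in> S \<Longrightarrow> 0 < d \<Longrightarrow> \<exists>r. 0 < r \<and> r < d \<and> P x r"
    and inside: "\<And>x r. P x r \<Longrightarrow> ball x r \<subseteq> B" and "bounded B"
    and finite_le: "\<And>\<F>. finite \<F> \<Longrightarrow> \<F> \<subseteq> {ball x r |x r. P x r} \<Longrightarrow> pairwise disjnt \<F> \<Longrightarrow>
                      measure lebesgue (\<Union>\<F>) \<le> e"
  obtains T where "S \<subseteq> T" "T \<in> lmeasurable" "measure lebesgue T \<le> e"
proof -
  obtain C where C: "countable C" "C \<subseteq> {(x, r). 0 < r \<and> P x r}"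
    and disj: "pairwise (\<lambda>i j. disjnt (ball (fst i) (snd i)) (ball (fst j) (snd j))) C"
    and covered: "negligible (S - (\<Union>i\<in>C. ball (fst i) (snd i)))"
  proof (rule Vitali_covering_theorem_balls[of S _ fst snd])
    show "\<exists>i. i \<in> {(x, r). 0 < r \<and> P x r} \<and> x \<in> ball (fst i) (snd i) \<and> snd i < d"
      if "x \<in> S" "0 < d" for x d
      using fine[OF that] by force
  qed blast
  define \<D> where "\<D> = (\<lambda>i. ball (fst i) (snd i)) ` C"
  have \<D>_balls: "\<D> \<subseteq> {ball x r |x r. P x r}"
  proof -
    have "ball (fst i) (snd i) \<in> {ball x r |x r. P x r}" if "i \<in> C" for i
    proof -
      have "P (fst i) (snd i)" using C(2) that by auto
      then show ?thesis by auto
    qed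
    then show ?thesis by (auto simp: \<D>_def)
  qed
  have \<D>_disj: "pairwise disjnt \<D>"
    using disj unfolding \<D>_def pairwise_image by (simp add: pairwise_def)
  have \<D>_lmeasurable: "\<Union>\<D> \<in> lmeasurable"
  proof (rule bounded_set_imp_lmeasurable)
    show "bounded (\<Union>\<D>)"
      using \<D>_balls inside by (blast intro: bounded_subset[OF \<open>bounded B\<close>])
    have "open (\<Union>\<D>)"
      unfolding \<D>_def by (intro open_Union) auto
    then show "\<Union>\<D> \<in> sets lebesgue"
      by simp
  qed
  have \<D>_le: "measure lebesgue (\<Union>\<D>) \<le> e"
  proof (rule measure_countable_Union_le)
    show "countable \<D>" using C(1) by (simp add: \<D>_def)
    show "D \<in> lmeasurable" if "D \<in> \<D>" for D
      using that by (auto simp: \<D>_def)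
    show "measure lebesgue (\<Union>\<F>) \<le> e" if "\<F> \<subseteq> \<D>" "finite \<F>" for \<F>
      using finite_le[OF that(2)] \<D>_balls pairwise_subset[OF \<D>_disj that(1)] that(1) by blast
  qed
  have "negligible (S - \<Union>\<D>)"
    using covered by (simp add: \<D>_def)
  note T = outer_measure_le_negligible_diff[OF this \<D>_lmeasurable]
  show ?thesis
    by (rule that[OF T(1,2)]) (use T(3) \<D>_le in linarith)
qed

lemma integral_le_sublevel_bound:
  fixes g :: "'a::euclidean_space \<Rightarrow> real" and a :: real
  defines "M \<equiv> {x. g x < a}"
  assumes g: "g absolutely_integrable_on UNIV"
    and V: "V \<in> lmeasurable" "V \<subseteq> U" and UM: "U - M \<in> lmeasurable"
  shows "integral V g \<le> a * measure lebesgue V + \<bar>a\<bar> * measure lebesgue (U - M)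
           + integral (U - M) (\<lambda>x. \<bar>g x\<bar>)"
proof -
  have "g \<in> borel_measurable lebesgue"
    using absolutely_integrable_imp_borel_measurable[OF g] by simp
  then have M: "M \<in> sets lebesgue"
    using borel_measurable_iff_less[of g lebesgue] by (auto simp: M_def)
  have VM: "V \<inter> M \<in> lmeasurable" "V - M \<in> lmeasurable"
    using V M by (auto intro: fmeasurable_Int_fmeasurable fmeasurable_Diff)
  have int: "g integrable_on A" "(\<lambda>x. \<bar>g x\<bar>) integrable_on A" if "A \<in> sets lebesgue" for A
    using set_integrable_subset[OF g that] by (auto simp: absolutely_integrable_on_def)
  have "integral V g = integral (V \<inter> M) g + integral (V - M) g"
  proof -
    have "integral ((V \<inter> M) \<union> (V - M)) g = integral (V \<inter> M) g + integral (V - M) g"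
    proof (rule integral_Un)
      have "V \<inter> M \<inter> (V - M) = {}" by blast
      then show "negligible (V \<inter> M \<inter> (V - M))" by simp
    qed (use VM int in auto)
    then show ?thesis by (simp add: Int_Diff_Un)
  qed
  also have "integral (V \<inter> M) g \<le> integral (V \<inter> M) (\<lambda>x. a)"
    by (rule integral_le) (use VM int integrable_on_const in \<open>auto simp: M_def\<close>)
  also have "\<dots> = a * measure lebesgue (V \<inter> M)"
    using VM(1) by (rule integral_const_lmeasurable)
  also have "integral (V - M) g \<le> integral (V - M) (\<lambda>x. \<bar>g x\<bar>)"
    by (rule integral_le) (use VM int in auto)
  also have "\<dots> \<le> integral (U - M) (\<lambda>x. \<bar>g x\<bar>)"
    by (rule integral_subset_le) (use V UM VM int in auto)
  also have "a * measure lebesgue (V \<inter> M) \<le> a * measure lebesgue V + \<bar>a\<bar> * measure lebesgue (U - M)"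
  proof -
    have "V - M - V \<inter> M = V - M" by blast
    then have "measure lebesgue V = measure lebesgue (V \<inter> M) + measure lebesgue (V - M)"
      using measure_Un2[OF VM] by (simp add: Int_Diff_Un)
    then have "a * measure lebesgue (V \<inter> M) = a * measure lebesgue V - a * measure lebesgue (V - M)"
      by (simp add: algebra_simps)
    moreover have "- (a * measure lebesgue (V - M)) \<le> \<bar>a\<bar> * measure lebesgue (V - M)"
      by (metis abs_ge_minus_self abs_ge_zero measure_nonneg minus_mult_left mult_right_mono)
    moreover have "\<bar>a\<bar> * measure lebesgue (V - M) \<le> \<bar>a\<bar> * measure lebesgue (U - M)"
      by (intro mult_left_mono measure_mono_fmeasurable) (use V UM VM in auto)
    ultimately show ?thesis by linarith
  qed
  finally show ?thesis by linarith
qed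

lemma sublevel_set_outer_open:
  fixes g :: "'a::euclidean_space \<Rightarrow> real" and a :: real
  defines "M \<equiv> {x. g x < a}"
  assumes g: "g absolutely_integrable_on UNIV" and "\<eta> > 0"
  obtains U where "open U" "M \<subseteq> U" "U - M \<in> lmeasurable"
    "\<bar>a\<bar> * measure lebesgue (U - M) + integral (U - M) (\<lambda>x. \<bar>g x\<bar>) < \<eta>"
proof -
  obtain \<delta> where "\<delta> > 0" and \<delta>:
    "\<And>A. A \<in> lmeasurable \<Longrightarrow> measure lebesgue A < \<delta> \<Longrightarrow> integral A (\<lambda>x. \<bar>g x\<bar>) < \<eta>/2"
    using absolutely_integrable_small_measure[OF g, of "\<eta>/2"] \<open>\<eta> > 0\<close> by auto
  have "g \<in> borel_measurable lebesgue"
    using absolutely_integrable_imp_borel_measurable[OF g] by simp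
  then have "M \<in> sets lebesgue"
    using borel_measurable_iff_less[of g lebesgue] by (auto simp: M_def)
  moreover have "min \<delta> (\<eta> / (2 * \<bar>a\<bar> + 2)) > 0"
    using \<open>\<delta> > 0\<close> \<open>\<eta> > 0\<close> by simp
  ultimately obtain U where U: "open U" "M \<subseteq> U" "U - M \<in> lmeasurable"
    and "emeasure lebesgue (U - M) < ennreal (min \<delta> (\<eta> / (2 * \<bar>a\<bar> + 2)))"
    using sets_lebesgue_outer_open by blast
  then have UM: "measure lebesgue (U - M) < min \<delta> (\<eta> / (2 * \<bar>a\<bar> + 2))"
    by (simp add: emeasure_eq_measure2 ennreal_less_iff)
  then have "(2 * \<bar>a\<bar> + 2) * measure lebesgue (U - M) \<le> \<eta>"
    by (simp add: field_simps)
  then have "\<bar>a\<bar> * measure lebesgue (U - M) + measure lebesgue (U - M) \<le> \<eta>/2"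
    by (simp add: algebra_simps)
  moreover have "0 \<le> measure lebesgue (U - M)"
    by simp
  ultimately have "\<bar>a\<bar> * measure lebesgue (U - M) + integral (U - M) (\<lambda>x. \<bar>g x\<bar>) < \<eta>"
    using \<delta>[OF U(3)] UM by linarith
  with U show ?thesis
    using that by blast
qed

lemma measure_Union_le_integral_excess:
  fixes g :: "'a::euclidean_space \<Rightarrow> real" and a b :: real
  defines "M \<equiv> {x. g x < a}"
  assumes g: "g absolutely_integrable_on UNIV"
    and \<F>: "finite \<F>" "pairwise disjnt \<F>" "\<And>B. B \<in> \<F> \<Longrightarrow> B \<in> lmeasurable" "\<Union>\<F> \<subseteq> U"
    and large: "\<And>B. B \<in> \<F> \<Longrightarrow> b * measure lebesgue B \<le> integral B g"
    and UM: "U - M \<in> lmeasurable"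
  shows "(b - a) * measure lebesgue (\<Union>\<F>) \<le> \<bar>a\<bar> * measure lebesgue (U - M) + integral (U - M) (\<lambda>x. \<bar>g x\<bar>)"
proof -
  have \<F>_negl: "pairwise (\<lambda>S T. negligible (S \<inter> T)) \<F>"
    using \<F>(2) by (auto simp: pairwise_def disjnt_def)
  have "b * measure lebesgue (\<Union>\<F>) = (\<Sum>B\<in>\<F>. b * measure lebesgue B)"
    by (simp add: measure_negligible_finite_Union[OF \<F>(1) \<F>(3) \<F>_negl] sum_distrib_left)
  also have "\<dots> \<le> (\<Sum>B\<in>\<F>. integral B g)"
    by (rule sum_mono) (rule large)
  also have "\<dots> = integral (\<Union>\<F>) g"
  proof -
    have "(g has_integral (\<Sum>B\<in>\<F>. integral B g)) (\<Union>\<F>)"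
    proof (rule has_integral_Union[OF \<F>(1) _ \<F>_negl])
      show "(g has_integral integral B g) B" if "B \<in> \<F>" for B
        using set_integrable_subset[OF g] \<F>(3)[OF that]
        by (auto simp: absolutely_integrable_on_def)
    qed
    then show ?thesis by (simp add: integral_unique)
  qed
  also have "\<dots> \<le> a * measure lebesgue (\<Union>\<F>) + \<bar>a\<bar> * measure lebesgue (U - M)
                 + integral (U - M) (\<lambda>x. \<bar>g x\<bar>)"
    unfolding M_def
  proof (rule integral_le_sublevel_bound[OF g])
    show "\<Union>\<F> \<in> lmeasurable" using \<F>(1,3) by blast
  qed (use \<F>(4) UM in \<open>simp_all add: M_def\<close>)
  finally show ?thesis
    by (simp add: algebra_simps)
qed

text \<open>
  Cover the set by small disjoint Vitali balls inside an open \<open>U\<close> that exceeds \<open>{g < a}\<close>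
  by little measure and little \<open>L\<^sup>1\<close> mass: on these balls \<open>g\<close> averages above \<open>b\<close> although it is
  mostly below \<open>a\<close>, so their union has small measure.
\<close>

lemma negligible_large_ball_averages:
  fixes g :: "'a::euclidean_space \<Rightarrow> real"
  assumes g: "g absolutely_integrable_on UNIV" and "a < b"
  shows "negligible {x \<in> ball 0 R. g x < a \<and>
           (\<forall>d>0. \<exists>r. 0 < r \<and> r < d \<and> b * measure lebesgue (ball x r) < integral (ball x r) g)}"
    (is "negligible ?S")
  unfolding negligible_outer_le
proof (intro allI impI)
  fix e :: real assume "e > 0"
  then have "e * (b - a) > 0"
    using \<open>a < b\<close> by simp
  then obtain U where U: "open U" "{x. g x < a} \<subseteq> U" "U - {x. g x < a} \<in> lmeasurable"
    and U_small: "\<bar>a\<bar> * measure lebesgue (U - {x. g x < a}) + integral (U - {x. g x < a}) (\<lambda>x. \<bar>g x\<bar>)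
                    < e * (b - a)"
    by (rule sublevel_set_outer_open[OF g])
  define P where "P x r \<longleftrightarrow> ball x r \<subseteq> U \<inter> ball 0 R \<and> b * measure lebesgue (ball x r) < integral (ball x r) g"
    for x r
  obtain T where "?S \<subseteq> T" "T \<in> lmeasurable" "measure lebesgue T \<le> e"
  proof (rule Vitali_outer_measure_le[of ?S P "ball 0 R"])
    fix x and d :: real assume x: "x \<in> ?S" and "0 < d"
    then have "x \<in> U \<inter> ball 0 R"
      using U(2) by auto
    then obtain \<rho> where "\<rho> > 0" "ball x \<rho> \<subseteq> U \<inter> ball 0 R"
      using U(1) by (meson open_Int open_ball open_contains_ball)
    moreover have "min d \<rho> > 0"
      using \<open>0 < d\<close> \<open>\<rho> > 0\<close> by simp
    then obtain r where "0 < r" "r < min d \<rho>"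
      "b * measure lebesgue (ball x r) < integral (ball x r) g"
      using x by blast
    ultimately show "\<exists>r. 0 < r \<and> r < d \<and> P x r"
      unfolding P_def by (meson order.trans less_imp_le min_less_iff_conj subset_ball)
  next
    fix \<F> assume \<F>: "finite \<F>" "\<F> \<subseteq> {ball x r |x r. P x r}" "pairwise disjnt \<F>"
    have "(b - a) * measure lebesgue (\<Union>\<F>) \<le>
        \<bar>a\<bar> * measure lebesgue (U - {x. g x < a}) + integral (U - {x. g x < a}) (\<lambda>x. \<bar>g x\<bar>)"
    proof (rule measure_Union_le_integral_excess[OF g \<F>(1,3) _ _ _ U(3)])
      show "B \<in> lmeasurable" "b * measure lebesgue B \<le> integral B g" if "B \<in> \<F>" for B
        using \<F>(2) that by (auto simp: P_def)
      show "\<Union>\<F> \<subseteq> U"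
        using \<F>(2) by (auto simp: P_def)
    qed
    then have "(b - a) * measure lebesgue (\<Union>\<F>) \<le> (b - a) * e"
      using U_small by (simp add: algebra_simps)
    then show "measure lebesgue (\<Union>\<F>) \<le> e"
      using \<open>a < b\<close> by simp
  qed (auto simp: P_def)
  then show "\<exists>T. ?S \<subseteq> T \<and> T \<in> lmeasurable \<and> measure lebesgue T \<le> e"
    by blast
qed

lemma AE_ball_integral_le:
  fixes g :: "'a::euclidean_space \<Rightarrow> real"
  assumes g: "g absolutely_integrable_on UNIV"
  shows "AE x in lebesgue. \<forall>c. g x < c \<longrightarrow>
           (\<exists>d>0. \<forall>r. 0 < r \<and> r < d \<longrightarrow> integral (ball x r) g \<le> c * measure lebesgue (ball x r))"
proof -
  define S where "S a b n = {x \<in> ball 0 (real n). g x < a \<and>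
      (\<forall>d>0. \<exists>r. 0 < r \<and> r < d \<and> b * measure lebesgue (ball x r) < integral (ball x r) g)}"
    for a b :: real and n :: nat
  have null: "AE x in lebesgue. x \<notin> S a b n" if "a < b" for a b n
  proof -
    have "S a b n \<in> null_sets lebesgue"
      using negligible_large_ball_averages[OF g that] by (simp add: S_def negligible_iff_null_sets)
    then show ?thesis by (rule AE_not_in)
  qed
  have "AE x in lebesgue. \<forall>(a, b, n) \<in> \<rat> \<times> \<rat> \<times> UNIV. a < b \<longrightarrow> x \<notin> S a b n"
    by (subst AE_ball_countable) (auto intro!: countable_SIGMA countable_rat null)
  then show ?thesis
  proof (rule AE_mp, intro AE_I2 impI allI)
    fix x and c :: real
    assume x: "\<forall>(a, b, n) \<in> \<rat> \<times> \<rat> \<times> UNIV. a < b \<longrightarrow> x \<notin> S a b n" and "g x < c"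
    obtain a where a: "a \<in> \<rat>" "g x < a" "a < c" using Rats_dense_in_real[OF \<open>g x < c\<close>] by blast
    obtain b where b: "b \<in> \<rat>" "a < b" "b < c" using Rats_dense_in_real[OF \<open>a < c\<close>] by blast
    obtain n :: nat where "norm x < real n" using reals_Archimedean2 by blast
    then have "x \<notin> S a b n" and "x \<in> ball 0 (real n)"
      using x a b by auto
    then obtain d where "d > 0"
      and d: "\<And>r. 0 < r \<Longrightarrow> r < d \<Longrightarrow> integral (ball x r) g \<le> b * measure lebesgue (ball x r)"
      using a by (auto simp: S_def not_less) (meson not_less)
    show "\<exists>d>0. \<forall>r. 0 < r \<and> r < d \<longrightarrow> integral (ball x r) g \<le> c * measure lebesgue (ball x r)"
    proof (intro exI[of _ d] conjI allI impI)
      fix r assume "0 < r \<and> r < d"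
      then have "integral (ball x r) g \<le> b * measure lebesgue (ball x r)"
        using d by blast
      also have "\<dots> \<le> c * measure lebesgue (ball x r)"
        using b by (intro mult_right_mono) auto
      finally show "integral (ball x r) g \<le> c * measure lebesgue (ball x r)" .
    qed fact
  qed
qed

lemma absolutely_integrable_abs_diff_const:
  fixes h :: "'a::euclidean_space \<Rightarrow> real"
  assumes "h absolutely_integrable_on S" "S \<in> lmeasurable"
  shows "(\<lambda>y. \<bar>h y - c\<bar>) absolutely_integrable_on S"
  using set_integral_diff(1)[OF assms(1) absolutely_integrable_on_const[OF assms(2), of c]]
  by (rule set_integrable_abs)

lemma integral_abs_diff_const_le:
  fixes h :: "'a::euclidean_space \<Rightarrow> real"
  assumes "h absolutely_integrable_on S" "S \<in> lmeasurable"
  shows "integral S (\<lambda>y. \<bar>h y - c\<bar>) \<le> integral S (\<lambda>y. \<bar>h y - q\<bar>) + \<bar>c - q\<bar> * measure lebesgue S"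
proof -
  have int: "(\<lambda>y. \<bar>h y - c'\<bar>) integrable_on S" for c'
    using absolutely_integrable_abs_diff_const[OF assms] by (simp add: absolutely_integrable_on_def)
  have "integral S (\<lambda>y. \<bar>h y - c\<bar>) \<le> integral S (\<lambda>y. \<bar>h y - q\<bar> + \<bar>c - q\<bar>)"
    by (rule integral_le) (use int integrable_add[OF int integrable_on_const[OF assms(2)]] in auto)
  also have "\<dots> = integral S (\<lambda>y. \<bar>h y - q\<bar>) + \<bar>c - q\<bar> * measure lebesgue S"
    using integral_add[OF int integrable_on_const[OF assms(2)]] assms(2)
    by (simp add: integral_const_lmeasurable)
  finally show ?thesis .
qed

definition lebesgue_point :: "('a::euclidean_space \<Rightarrow> real) \<Rightarrow> 'a \<Rightarrow> bool" where
  "lebesgue_point h x \<longleftrightarrow> (\<forall>e>0. \<exists>d>0. \<forall>r. 0 < r \<and> r < d \<longrightarrow>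
     integral (ball x r) (\<lambda>y. \<bar>h y - h x\<bar>) \<le> e * measure lebesgue (ball x r))"

lemma AE_lebesgue_point:
  fixes h :: "'a::euclidean_space \<Rightarrow> real"
  assumes h: "h absolutely_integrable_on UNIV"
  shows "AE x in lebesgue. lebesgue_point h x"
proof -
  have h_ball: "(\<lambda>y. \<bar>h y - c\<bar>) absolutely_integrable_on ball z r" for c z r
  proof (rule absolutely_integrable_abs_diff_const)
    show "h absolutely_integrable_on ball z r"
      by (rule set_integrable_subset[OF h]) auto
  qed auto
  \<comment> \<open>By the triangle inequality it suffices to control ball averages of \<open>\<bar>h - q\<bar>\<close> for the
      countably many rational \<open>q\<close>; the cut-off to \<open>ball 0 n\<close> makes these functions integrable.\<close>
  define g where "g q n y = (if y \<in> ball 0 (real n) then \<bar>h y - q\<bar> else 0)" for q n y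
  have g: "g q n absolutely_integrable_on UNIV" for q n
    unfolding g_def by (simp only: absolutely_integrable_restrict_UNIV h_ball)
  have "AE x in lebesgue. \<forall>q \<in> \<rat>. \<forall>n. \<forall>c. g q n x < c \<longrightarrow>
      (\<exists>d>0. \<forall>r. 0 < r \<and> r < d \<longrightarrow> integral (ball x r) (g q n) \<le> c * measure lebesgue (ball x r))"
    using AE_ball_integral_le[OF g] by (simp add: AE_ball_countable countable_rat AE_all_countable)
  then show ?thesis
  proof (rule AE_mp, intro AE_I2 impI)
    fix x
    assume x: "\<forall>q \<in> \<rat>. \<forall>n. \<forall>c. g q n x < c \<longrightarrow>
      (\<exists>d>0. \<forall>r. 0 < r \<and> r < d \<longrightarrow> integral (ball x r) (g q n) \<le> c * measure lebesgue (ball x r))"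
    show "lebesgue_point h x"
      unfolding lebesgue_point_def
    proof (intro allI impI)
      fix e :: real assume "e > 0"
      obtain q where q: "q \<in> \<rat>" "h x - e/2 < q" "q < h x"
        using Rats_dense_in_real[of "h x - e/2" "h x"] \<open>e > 0\<close> by auto
      obtain n :: nat where n: "norm x < real n" using reals_Archimedean2 by blast
      then have "g q n x < e/2"
        using q by (simp add: g_def)
      then obtain d where "d > 0" and d: "\<forall>r. 0 < r \<and> r < d \<longrightarrow>
          integral (ball x r) (g q n) \<le> e/2 * measure lebesgue (ball x r)"
        using x[rule_format, OF q(1)] by blast
      show "\<exists>d>0. \<forall>r. 0 < r \<and> r < d \<longrightarrow>
              integral (ball x r) (\<lambda>y. \<bar>h y - h x\<bar>) \<le> e * measure lebesgue (ball x r)"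
      proof (intro exI[of _ "min d (real n - norm x)"] conjI allI impI)
        show "min d (real n - norm x) > 0" using \<open>d > 0\<close> n by simp
        fix r assume r: "0 < r \<and> r < min d (real n - norm x)"
        have "ball x r \<subseteq> ball 0 (real n)"
          using r by (subst ball_subset_ball_iff) auto
        have "integral (ball x r) (\<lambda>y. \<bar>h y - h x\<bar>)
                \<le> integral (ball x r) (\<lambda>y. \<bar>h y - q\<bar>) + \<bar>h x - q\<bar> * measure lebesgue (ball x r)"
          by (rule integral_abs_diff_const_le) (use set_integrable_subset[OF h] in auto)
        also have "integral (ball x r) (\<lambda>y. \<bar>h y - q\<bar>) = integral (ball x r) (g q n)"
          using \<open>ball x r \<subseteq> ball 0 (real n)\<close> by (intro integral_cong) (auto simp: g_def)
        also have "integral (ball x r) (g q n) + \<bar>h x - q\<bar> * measure lebesgue (ball x r)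
                     \<le> e/2 * measure lebesgue (ball x r) + e/2 * measure lebesgue (ball x r)"
          using d r q by (intro add_mono mult_right_mono) auto
        finally show "integral (ball x r) (\<lambda>y. \<bar>h y - h x\<bar>) \<le> e * measure lebesgue (ball x r)"
          by simp
      qed
    qed
  qed
qed

lemma measure_ball_real: "0 \<le> r \<Longrightarrow> measure lebesgue (ball (x::real) r) = 2 * r"
  by (simp add: ball_eq_greaterThanLessThan)

lemma lebesgue_point_cong:
  assumes "0 < \<rho>" "\<And>y. y \<in> ball x \<rho> \<Longrightarrow> h' y = h y" "lebesgue_point h' x"
  shows "lebesgue_point h x"
  unfolding lebesgue_point_def
proof (intro allI impI)
  fix e :: real assume "e > 0"
  then obtain d where "d > 0" and d: "\<forall>r. 0 < r \<and> r < d \<longrightarrow>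
      integral (ball x r) (\<lambda>y. \<bar>h' y - h' x\<bar>) \<le> e * measure lebesgue (ball x r)"
    using assms(3) unfolding lebesgue_point_def by blast
  show "\<exists>d>0. \<forall>r. 0 < r \<and> r < d \<longrightarrow>
          integral (ball x r) (\<lambda>y. \<bar>h y - h x\<bar>) \<le> e * measure lebesgue (ball x r)"
  proof (intro exI[of _ "min d \<rho>"] conjI allI impI)
    fix r assume r: "0 < r \<and> r < min d \<rho>"
    have "integral (ball x r) (\<lambda>y. \<bar>h y - h x\<bar>) = integral (ball x r) (\<lambda>y. \<bar>h' y - h' x\<bar>)"
      using r assms(1,2) by (intro integral_cong) auto
    then show "integral (ball x r) (\<lambda>y. \<bar>h y - h x\<bar>) \<le> e * measure lebesgue (ball x r)"
      using d r by simp
  qed (use \<open>d > 0\<close> assms(1) in auto)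
qed

lemma integral_increment_deviation_le:
  fixes h :: "real \<Rightarrow> real"
  assumes h: "h absolutely_integrable_on {u..b}" and "u \<le> v" "v \<le> b"
  shows "\<bar>integral {u..b} h - integral {v..b} h - (v - u) * c\<bar> \<le> integral {u..v} (\<lambda>y. \<bar>h y - c\<bar>)"
proof -
  have "h absolutely_integrable_on {u..v}"
    by (rule set_integrable_subset[OF h]) (use assms in auto)
  then have int: "h integrable_on {u..v}" "(\<lambda>y. \<bar>h y - c\<bar>) integrable_on {u..v}"
    using absolutely_integrable_abs_diff_const[where c = c] by (auto simp: absolutely_integrable_on_def)
  have "integral {u..b} h - integral {v..b} h = integral {u..v} h"
    using Henstock_Kurzweil_Integration.integral_combine[OF assms(2,3), of h] h
    by (auto simp: absolutely_integrable_on_def)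
  also have "\<dots> - (v - u) * c = integral {u..v} (\<lambda>y. h y - c)"
    using integral_diff[OF int(1) integrable_const_ivl[of c u v]] assms(2) by (simp add: mult.commute)
  finally have "integral {u..b} h - integral {v..b} h - (v - u) * c = integral {u..v} (\<lambda>y. h y - c)" .
  also have "\<bar>\<dots>\<bar> \<le> integral {u..v} (\<lambda>y. \<bar>h y - c\<bar>)"
    using integral_norm_bound_integral[of "\<lambda>y. h y - c" "{u..v}" "\<lambda>y. \<bar>h y - c\<bar>"]
      int integrable_diff[OF int(1) integrable_const_ivl]
    by simp
  finally show ?thesis .
qed

lemma lebesgue_point_has_real_derivative_integral:
  fixes h :: "real \<Rightarrow> real"
  assumes h: "h absolutely_integrable_on {a..b}" and x: "x \<in> {a<..<b}" and "lebesgue_point h x"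
  shows "((\<lambda>t. integral {t..b} h) has_real_derivative - h x) (at x)"
  unfolding DERIV_def LIM_eq
proof (intro allI impI)
  fix e :: real assume "e > 0"
  then have "e/8 > 0" by simp
  then obtain d where "d > 0" and d: "\<forall>r. 0 < r \<and> r < d \<longrightarrow>
      integral (ball x r) (\<lambda>y. \<bar>h y - h x\<bar>) \<le> e/8 * measure lebesgue (ball x r)"
    using \<open>lebesgue_point h x\<close> unfolding lebesgue_point_def by blast
  define s where "s = min (d/2) (min (x - a) (b - x) / 2)"
  show "\<exists>s>0. \<forall>k. k \<noteq> 0 \<and> norm (k - 0) < s \<longrightarrow>
          norm ((integral {x + k..b} h - integral {x..b} h) / k - - h x) < e"
  proof (intro exI[of _ s] conjI allI impI)
    show "s > 0" using \<open>d > 0\<close> x by (simp add: s_def)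
    fix k :: real assume k: "k \<noteq> 0 \<and> norm (k - 0) < s"
    define u v where "u = min x (x + k)" and "v = max x (x + k)"
    have uv: "a \<le> u" "u \<le> v" "v \<le> b" "v - u = \<bar>k\<bar>"
      using k x by (auto simp: u_def v_def s_def)
    have "\<bar>integral {x + k..b} h - integral {x..b} h + k * h x\<bar>
            = \<bar>integral {u..b} h - integral {v..b} h - (v - u) * h x\<bar>"
      by (cases "k > 0") (auto simp: u_def v_def)
    also have "\<dots> \<le> integral {u..v} (\<lambda>y. \<bar>h y - h x\<bar>)"
      by (rule integral_increment_deviation_le[OF set_integrable_subset[OF h]]) (use uv in auto)
    also have "\<dots> \<le> integral (ball x (2 * \<bar>k\<bar>)) (\<lambda>y. \<bar>h y - h x\<bar>)"
    proof (rule integral_subset_le)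
      have "ball x (2 * \<bar>k\<bar>) \<subseteq> {a..b}"
        using k x by (auto simp: s_def dist_real_def)
      then show "(\<lambda>y. \<bar>h y - h x\<bar>) integrable_on ball x (2 * \<bar>k\<bar>)"
        using absolutely_integrable_abs_diff_const[OF set_integrable_subset[OF h]]
        by (auto simp: absolutely_integrable_on_def)
      show "{u..v} \<subseteq> ball x (2 * \<bar>k\<bar>)"
        using k by (auto simp: u_def v_def dist_real_def)
      show "(\<lambda>y. \<bar>h y - h x\<bar>) integrable_on {u..v}"
        using absolutely_integrable_abs_diff_const[OF set_integrable_subset[OF h]] uv
        by (auto simp: absolutely_integrable_on_def)
    qed simp
    also have "\<dots> \<le> e/8 * measure lebesgue (ball x (2 * \<bar>k\<bar>))"
      using d k by (auto simp: s_def)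
    also have "\<dots> = e/8 * (2 * (2 * \<bar>k\<bar>))"
      by (simp only: measure_ball_real abs_ge_zero mult_nonneg_nonneg zero_le_numeral)
    finally have "\<bar>integral {x + k..b} h - integral {x..b} h + k * h x\<bar> / \<bar>k\<bar> \<le> e/2"
      using k by (simp add: divide_le_eq)
    moreover have "(integral {x + k..b} h - integral {x..b} h) / k - - h x
                     = (integral {x + k..b} h - integral {x..b} h + k * h x) / k"
      using k by (simp add: field_simps)
    ultimately show "norm ((integral {x + k..b} h - integral {x..b} h) / k - - h x) < e"
      using \<open>e > 0\<close> by (simp only: real_norm_def abs_divide)
  qed
qed

lemma AE_has_real_derivative_integral:
  fixes h :: "real \<Rightarrow> real"
  assumes h: "h absolutely_integrable_on {a..b}"
  shows "AE x in lborel. x \<in> {a<..<b} \<longrightarrow> ((\<lambda>t. integral {t..b} h) has_real_derivative - h x) (at x)"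
proof -
  define h' where "h' y = (if y \<in> {a..b} then h y else 0)" for y
  have "h' absolutely_integrable_on UNIV"
    unfolding h'_def using h by (simp only: absolutely_integrable_restrict_UNIV)
  then have "AE x in lebesgue. lebesgue_point h' x"
    by (rule AE_lebesgue_point)
  then have "AE x in lborel. lebesgue_point h' x"
    by (simp add: AE_completion_iff)
  then show ?thesis
  proof (rule AE_mp, intro AE_I2 impI)
    fix x assume "lebesgue_point h' x" and x: "x \<in> {a<..<b}"
    have "lebesgue_point h x"
    proof (rule lebesgue_point_cong[OF _ _ \<open>lebesgue_point h' x\<close>])
      show "0 < min (x - a) (b - x)" using x by simp
      show "h' y = h y" if "y \<in> ball x (min (x - a) (b - x))" for y
        using that by (auto simp: h'_def dist_real_def)
    qed
    then show "((\<lambda>t. integral {t..b} h) has_real_derivative - h x) (at x)"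
      by (rule lebesgue_point_has_real_derivative_integral[OF h x])
  qed
qed

lemma has_integral_Beta_interval:
  fixes a b t y :: real
  assumes "0 < a" "0 < b" "t < y"
  shows "((\<lambda>s. (s - t) powr (a - 1) * (y - s) powr (b - 1)) has_integral
           (y - t) powr (a + b - 1) * Beta a b) {t..y}"
proof -
  define L where "L = y - t"
  have "L > 0" using assms(3) by (simp add: L_def)
  define f where "f u = u powr (a - 1) * (1 - u) powr (b - 1)" for u :: real
  have "(f has_integral Beta a b) (cbox 0 1)"
    unfolding f_def[abs_def] using has_integral_Beta_real[OF assms(1,2)] by simp
  then have "((\<lambda>s. f ((1/L) *\<^sub>R s + (- t/L))) has_integral (Beta a b /\<^sub>R (1/L) ^ DIM(real)))
               (cbox ((0 - (- t/L)) /\<^sub>R (1/L)) ((1 - (- t/L)) /\<^sub>R (1/L)))"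
    by (rule has_integral_affinity') (use \<open>L > 0\<close> in simp)
  moreover have "(0 - (- t/L)) /\<^sub>R (1/L) = t" "(1 - (- t/L)) /\<^sub>R (1/L) = y"
    using \<open>L > 0\<close> by (simp_all add: L_def field_simps)
  ultimately have "((\<lambda>s. f ((s - t) / L)) has_integral L * Beta a b) {t..y}"
    using \<open>L > 0\<close> by (simp add: field_simps)
  then have scaled: "((\<lambda>s. L powr (a + b - 2) * f ((s - t) / L)) has_integral
               L powr (a + b - 2) * (L * Beta a b)) {t..y}"
    by (rule has_integral_mult_right)
  have total: "L powr (a + b - 2) * (L * Beta a b) = L powr (a + b - 1) * Beta a b"
    using \<open>L > 0\<close> by (simp add: powr_diff powr_add field_simps power2_eq_square)
  have integrand: "L powr (a + b - 2) * f ((s - t) / L) = (s - t) powr (a - 1) * (y - s) powr (b - 1)"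
    if "s \<in> {t..y}" for s
  proof -
    have "1 - (s - t) / L = (y - s) / L"
      using \<open>L > 0\<close> by (simp add: L_def field_simps)
    then have "f ((s - t) / L) = ((s - t) powr (a - 1) / L powr (a - 1)) * ((y - s) powr (b - 1) / L powr (b - 1))"
      using that \<open>L > 0\<close> by (simp add: f_def powr_divide)
    moreover have "L powr (a + b - 2) = L powr (a - 1) * L powr (b - 1)"
      by (simp add: powr_add [symmetric])
    ultimately show ?thesis
      using \<open>L > 0\<close> by (simp add: field_simps)
  qed
  have "((\<lambda>s. (s - t) powr (a - 1) * (y - s) powr (b - 1)) has_integral L powr (a + b - 1) * Beta a b) {t..y}"
    by (rule has_integral_eq[OF integrand scaled[unfolded total]])
  then show ?thesis
    by (simp only: L_def)
qed

lemma Beta_complement: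
  fixes \<alpha> :: real
  assumes "\<alpha> \<notin> \<int>"
  shows "Beta \<alpha> (1 - \<alpha>) = pi / sin (\<alpha> * pi)"
proof -
  have "complex_of_real \<alpha> \<notin> \<int>"
  proof
    assume "complex_of_real \<alpha> \<in> \<int>"
    then obtain n :: int where "complex_of_real \<alpha> = of_int n"
      by (auto elim: Ints_cases)
    then have "\<alpha> = of_int n"
      by (metis of_real_eq_iff of_real_of_int_eq)
    then show False using assms by simp
  qed
  then have "complex_of_real (Gamma \<alpha> * Gamma (1 - \<alpha>)) = complex_of_real (pi / sin (pi * \<alpha>))"
    using Gamma_reflection_complex[of "complex_of_real \<alpha>"]
    by (simp add: Gamma_complex_of_real[symmetric] sin_of_real[symmetric])
  then show ?thesis
    by (simp only: of_real_eq_iff Beta_def) (simp add: mult.commute)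
qed

lemma (in pair_sigma_finite) integral_swap_constant_row_kernel:
  fixes G :: "'a \<Rightarrow> real" and k :: "'a \<Rightarrow> 'b \<Rightarrow> real"
  assumes G: "integrable M1 G"
    and k_meas: "(\<lambda>(y, s). k y s) \<in> borel_measurable (M1 \<Otimes>\<^sub>M M2)"
    and k_nonneg: "\<And>y s. 0 \<le> k y s"
    and k_row: "\<And>y. G y \<noteq> 0 \<Longrightarrow> integrable M2 (k y) \<and> (\<integral>s. k y s \<partial>M2) = \<beta>"
  shows "AE s in M2. integrable M1 (\<lambda>y. G y * k y s)"
    and "integrable M2 (\<lambda>s. \<integral>y. G y * k y s \<partial>M1)"
    and "(\<integral>s. (\<integral>y. G y * k y s \<partial>M1) \<partial>M2) = \<beta> * (\<integral>y. G y \<partial>M1)"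
proof -
  have meas: "(\<lambda>(y, s). G y * k y s) \<in> borel_measurable (M1 \<Otimes>\<^sub>M M2)"
  proof -
    have "(\<lambda>p. G (fst p)) \<in> borel_measurable (M1 \<Otimes>\<^sub>M M2)"
      using G by measurable
    then show ?thesis
      using k_meas by (simp add: case_prod_beta')
  qed
  have row: "integrable M2 (\<lambda>s. G y * k y s) \<and> (\<integral>s. G y * k y s \<partial>M2) = \<beta> * G y
      \<and> (\<integral>s. norm (G y * k y s) \<partial>M2) = \<beta> * \<bar>G y\<bar>" for y
  proof (cases "G y = 0")
    case False
    then show ?thesis
      using k_row[OF False] by (simp add: abs_mult abs_of_nonneg[OF k_nonneg])
  qed simp
  have int: "integrable (M1 \<Otimes>\<^sub>M M2) (\<lambda>(y, s). G y * k y s)"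
    using meas row G by (intro Fubini_integrable) auto
  show "AE s in M2. integrable M1 (\<lambda>y. G y * k y s)"
    using AE_integrable_snd[OF int] .
  show "integrable M2 (\<lambda>s. \<integral>y. G y * k y s \<partial>M1)"
    using integrable_snd[OF int] .
  have "(\<integral>s. (\<integral>y. G y * k y s \<partial>M1) \<partial>M2) = (\<integral>y. (\<integral>s. G y * k y s \<partial>M2) \<partial>M1)"
    using Fubini_integral[OF int] .
  also have "\<dots> = (\<integral>y. \<beta> * G y \<partial>M1)"
    using row by (intro Bochner_Integration.integral_cong) auto
  also have "\<dots> = \<beta> * (\<integral>y. G y \<partial>M1)"
    by simp
  finally show "(\<integral>s. (\<integral>y. G y * k y s \<partial>M1) \<partial>M2) = \<beta> * (\<integral>y. G y \<partial>M1)" .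
qed

lemma sigma_finite_lebesgue: "sigma_finite_measure (lebesgue :: 'a::euclidean_space measure)"
proof -
  obtain A :: "'a set set" where "countable A" "A \<subseteq> sets lborel" "\<Union>A = space lborel"
    "\<forall>a\<in>A. emeasure lborel a \<noteq> \<infinity>"
    using lborel.sigma_finite_countable by blast
  then show ?thesis
    unfolding sigma_finite_measure_def by (intro exI[of _ A]) (auto simp: emeasure_completion)
qed

interpretation lebesgue_pair: pair_sigma_finite "lebesgue :: real measure" "lebesgue :: real measure"
  by (simp add: pair_sigma_finite_def sigma_finite_lebesgue)

definition Abel_kernel :: "real \<Rightarrow> real \<Rightarrow> real \<Rightarrow> real \<Rightarrow> real" where
  "Abel_kernel \<alpha> t y s = (if t \<le> s \<and> s \<le> y then (s - t) powr (\<alpha> - 1) * (y - s) powr (- \<alpha>) else 0)"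

lemma Abel_kernel_nonneg: "0 \<le> Abel_kernel \<alpha> t y s"
  by (simp add: Abel_kernel_def)

lemma Abel_kernel_measurable:
  "(\<lambda>(y, s). Abel_kernel \<alpha> t y s) \<in> borel_measurable (lebesgue \<Otimes>\<^sub>M lebesgue)"
proof -
  have "fst \<in> borel_measurable (lebesgue \<Otimes>\<^sub>M (lebesgue :: real measure))"
    "snd \<in> borel_measurable (lebesgue \<Otimes>\<^sub>M (lebesgue :: real measure))"
    by (auto intro: measurable_compose[OF _ measurable_completion] measurable_fst'' measurable_snd'')
  then show ?thesis
    unfolding Abel_kernel_def case_prod_beta by measurable
qed

lemma Abel_kernel_integral:
  assumes "0 < \<alpha>" "\<alpha> < 1" "t < y"
  shows "integrable lebesgue (Abel_kernel \<alpha> t y) \<and> (\<integral>s. Abel_kernel \<alpha> t y s \<partial>lebesgue) = Beta \<alpha> (1 - \<alpha>)"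
proof -
  have "((\<lambda>s. (s - t) powr (\<alpha> - 1) * (y - s) powr (- \<alpha>)) has_integral Beta \<alpha> (1 - \<alpha>)) {t..y}"
    using has_integral_Beta_interval[of \<alpha> "1 - \<alpha>" t y] assms by simp
  then have "((\<lambda>s. if s \<in> {t..y} then (s - t) powr (\<alpha> - 1) * (y - s) powr (- \<alpha>) else 0)
               has_integral Beta \<alpha> (1 - \<alpha>)) UNIV"
    by (simp only: has_integral_restrict_UNIV)
  then have k: "(Abel_kernel \<alpha> t y has_integral Beta \<alpha> (1 - \<alpha>)) UNIV"
    by (simp add: Abel_kernel_def[abs_def])
  then have "integrable lebesgue (Abel_kernel \<alpha> t y)"
    using nonnegative_absolutely_integrable_1[of "Abel_kernel \<alpha> t y" UNIV] Abel_kernel_nonneg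
    by (auto simp: set_integrable_def)
  with k show ?thesis
    using integral_lebesgue[of "Abel_kernel \<alpha> t y"] by (simp add: integral_unique)
qed

text \<open>At \<open>s = t\<close> both sides vanish, because \<open>0 powr x = 0\<close>.\<close>

lemma Abel_kernel_column:
  "(if y \<in> {t<..u} then F y else 0) * Abel_kernel \<alpha> t y s
     = (if t \<le> s then (s - t) powr (\<alpha> - 1) else 0) * (if y \<in> {s..u} then (y - s) powr (- \<alpha>) * F y else 0)"
  by (cases "t = s") (auto simp: Abel_kernel_def)

lemma integral_Abel_kernel_column:
  fixes F :: "real \<Rightarrow> real"
  assumes "integrable lebesgue (\<lambda>y. (if y \<in> {t<..u} then F y else 0) * Abel_kernel \<alpha> t y s)"
  shows "(\<integral>y. (if y \<in> {t<..u} then F y else 0) * Abel_kernel \<alpha> t y s \<partial>lebesgue)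
           = (if t \<le> s then (s - t) powr (\<alpha> - 1) else 0) * integral {s..u} (\<lambda>y. (y - s) powr (- \<alpha>) * F y)"
proof -
  define c where "c = (if t \<le> s then (s - t) powr (\<alpha> - 1) else 0)"
  define H where "H y = (if y \<in> {s..u} then (y - s) powr (- \<alpha>) * F y else 0)" for y
  have "integrable lebesgue (\<lambda>y. c * H y)"
    using assms unfolding Abel_kernel_column c_def H_def .
  then have "c = 0 \<or> integrable lebesgue H"
    using integrable_mult_right[of "1 / c" lebesgue "\<lambda>y. c * H y"] by auto
  moreover have "(\<integral>y. H y \<partial>lebesgue) = integral {s..u} (\<lambda>y. (y - s) powr (- \<alpha>) * F y)"
    if "integrable lebesgue H"
  proof -
    have "(\<integral>y. H y \<partial>lebesgue) = integral UNIV H"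
      using integral_lebesgue[OF that] by simp
    also have "\<dots> = integral {s..u} (\<lambda>y. (y - s) powr (- \<alpha>) * F y)"
      unfolding H_def by (simp only: integral_restrict_UNIV)
    finally show ?thesis .
  qed
  ultimately have "c * (\<integral>y. H y \<partial>lebesgue) = c * integral {s..u} (\<lambda>y. (y - s) powr (- \<alpha>) * F y)"
    by auto
  moreover have "(\<integral>y. (if y \<in> {t<..u} then F y else 0) * Abel_kernel \<alpha> t y s \<partial>lebesgue)
                   = (\<integral>y. c * H y \<partial>lebesgue)"
    unfolding Abel_kernel_column c_def H_def ..
  ultimately show ?thesis
    by (simp only: integral_mult_right_zero c_def)
qed

lemma Abel_integral_composition:
  fixes F :: "real \<Rightarrow> real"
  assumes F: "F absolutely_integrable_on {t..u}" and "0 < \<alpha>" "\<alpha> < 1"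
  shows "integral {t..u} (\<lambda>s. (s - t) powr (\<alpha> - 1) * integral {s..u} (\<lambda>y. (y - s) powr (- \<alpha>) * F y))
           = Beta \<alpha> (1 - \<alpha>) * integral {t..u} F"
proof -
  define G where "G y = (if y \<in> {t<..u} then F y else 0)" for y
  define \<Psi> where "\<Psi> s = (if t \<le> s then (s - t) powr (\<alpha> - 1) else 0)
      * integral {s..u} (\<lambda>y. (y - s) powr (- \<alpha>) * F y)" for s
  have "F absolutely_integrable_on {t<..u}"
    by (rule set_integrable_subset[OF F]) auto
  then have "G absolutely_integrable_on UNIV"
    unfolding G_def by (simp only: absolutely_integrable_restrict_UNIV)
  then have G: "integrable lebesgue G"
    by (simp add: set_integrable_def)
  have "(\<integral>y. G y \<partial>lebesgue) = integral UNIV G"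
    using integral_lebesgue[OF G] by simp
  also have "\<dots> = integral {t<..u} F"
    unfolding G_def by (simp only: integral_restrict_UNIV)
  also have "\<dots> = integral {t..u} F"
    by (rule integral_spike_set) (auto intro: negligible_subset[of "{t}"])
  finally have G_integral: "(\<integral>y. G y \<partial>lebesgue) = integral {t..u} F" .
  have row: "integrable lebesgue (Abel_kernel \<alpha> t y) \<and> (\<integral>s. Abel_kernel \<alpha> t y s \<partial>lebesgue) = Beta \<alpha> (1 - \<alpha>)"
    if "G y \<noteq> 0" for y
    using that assms(2,3) by (intro Abel_kernel_integral) (auto simp: G_def split: if_splits)
  have swap: "AE s in lebesgue. integrable lebesgue (\<lambda>y. G y * Abel_kernel \<alpha> t y s)"
    "integrable lebesgue (\<lambda>s. \<integral>y. G y * Abel_kernel \<alpha> t y s \<partial>lebesgue)"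
    "(\<integral>s. (\<integral>y. G y * Abel_kernel \<alpha> t y s \<partial>lebesgue) \<partial>lebesgue) = Beta \<alpha> (1 - \<alpha>) * (\<integral>y. G y \<partial>lebesgue)"
    by (rule lebesgue_pair.integral_swap_constant_row_kernel[OF G Abel_kernel_measurable Abel_kernel_nonneg],
        fact row)+
  have "AE s in lebesgue. (\<integral>y. G y * Abel_kernel \<alpha> t y s \<partial>lebesgue) = \<Psi> s"
    using swap(1)
  proof (rule AE_mp, intro AE_I2 impI)
    fix s assume "integrable lebesgue (\<lambda>y. G y * Abel_kernel \<alpha> t y s)"
    then show "(\<integral>y. G y * Abel_kernel \<alpha> t y s \<partial>lebesgue) = \<Psi> s"
      unfolding G_def \<Psi>_def by (rule integral_Abel_kernel_column)
  qed
  then have "AE s in lborel. s \<in> UNIV \<longrightarrow> (\<integral>y. G y * Abel_kernel \<alpha> t y s \<partial>lebesgue) = \<Psi> s"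
    by (simp add: AE_completion_iff)
  moreover have "((\<lambda>s. \<integral>y. G y * Abel_kernel \<alpha> t y s \<partial>lebesgue)
                    has_integral Beta \<alpha> (1 - \<alpha>) * integral {t..u} F) UNIV"
    using has_integral_integral_lebesgue[OF swap(2)] swap(3) G_integral by simp
  ultimately have "(\<Psi> has_integral Beta \<alpha> (1 - \<alpha>) * integral {t..u} F) UNIV"
    by (simp only: has_integral_AE)
  moreover have "\<Psi> = (\<lambda>s. if s \<in> {t..u} then (s - t) powr (\<alpha> - 1) * integral {s..u} (\<lambda>y. (y - s) powr (- \<alpha>) * F y) else 0)"
    by (auto simp: \<Psi>_def)
  ultimately show ?thesis
    by (simp only: has_integral_restrict_UNIV integral_unique)
qed

lemma frac_int_complementary_composition:
  fixes K :: "real \<Rightarrow> real \<Rightarrow> real" and a b f :: "real \<Rightarrow> real"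
  assumes "0 < \<alpha>" "\<alpha> < 1"
    and K: "\<forall>(x, y) \<in> Delta. K x y = a x * b y"
    and a: "\<And>x. x \<in> {0..1} \<Longrightarrow> a x \<noteq> 0"
    and bf: "(\<lambda>y. b y * f y) absolutely_integrable_on {0..1}"
    and t: "t \<in> {0..1}"
  shows "frac_int (1 - \<alpha>) (\<lambda>s u. 1 / a u) (frac_int \<alpha> K f) t
           = c_const \<alpha> * integral {t..1} (\<lambda>y. b y * f y)"
proof (cases "t = 1")
  case False
  define \<psi> where "\<psi> s = integral {s..1} (\<lambda>y. (y - s) powr (- \<alpha>) * (b y * f y))" for s
  have inner: "(s - t) powr (- (1 - \<alpha>)) * (1 / a s) * frac_int \<alpha> K f s = (s - t) powr (\<alpha> - 1) * \<psi> s"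
    if s: "s \<in> {t..1}" for s
  proof (cases "s = 1")
    case False
    have "frac_int \<alpha> K f s = integral {s..1} (\<lambda>y. (y - s) powr (- \<alpha>) * K s y * f y)"
      using False by (simp add: frac_int_def)
    also have "\<dots> = integral {s..1} (\<lambda>y. a s * ((y - s) powr (- \<alpha>) * (b y * f y)))"
      by (rule integral_cong) (use s t K in \<open>auto simp: Delta_def\<close>)
    also have "\<dots> = a s * \<psi> s"
      by (simp add: \<psi>_def)
    finally have "frac_int \<alpha> K f s = a s * \<psi> s" .
    then show ?thesis
      using a[of s] s t by simp
  qed (simp add: frac_int_def \<psi>_def)
  have "frac_int (1 - \<alpha>) (\<lambda>s u. 1 / a u) (frac_int \<alpha> K f) t
      = integral {t..1} (\<lambda>s. (s - t) powr (- (1 - \<alpha>)) * (1 / a s) * frac_int \<alpha> K f s)"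
    using False by (simp only: frac_int_def if_False)
  also have "\<dots> = integral {t..1} (\<lambda>s. (s - t) powr (\<alpha> - 1) * \<psi> s)"
    by (rule integral_cong) (rule inner)
  also have "\<dots> = Beta \<alpha> (1 - \<alpha>) * integral {t..1} (\<lambda>y. b y * f y)"
    unfolding \<psi>_def
    by (rule Abel_integral_composition[OF _ assms(1,2)]) (rule set_integrable_subset[OF bf]; use t in auto)
  also have "Beta \<alpha> (1 - \<alpha>) = c_const \<alpha>"
  proof -
    have "\<alpha> \<notin> \<int>"
    proof
      assume "\<alpha> \<in> \<int>"
      then obtain n :: int where "\<alpha> = of_int n"
        by (auto elim: Ints_cases)
      then show False
        using assms(1,2) by simp
    qed
    then show ?thesis
      by (simp add: Beta_complement c_const_def)
  qed
  finally show ?thesis .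
qed (simp add: frac_int_def)

lemma c_const_pos: "0 < \<alpha> \<Longrightarrow> \<alpha> < 1 \<Longrightarrow> 0 < c_const \<alpha>"
  unfolding c_const_def by (intro divide_pos_pos sin_gt_zero) auto

lemma frac_int_composition_has_derivative:
  fixes K :: "real \<Rightarrow> real \<Rightarrow> real" and a b f :: "real \<Rightarrow> real"
  assumes "0 < \<alpha>" "\<alpha> < 1"
    and "\<forall>(x, y) \<in> Delta. K x y = a x * b y"
    and "\<And>x. x \<in> {0..1} \<Longrightarrow> a x \<noteq> 0"
    and b: "continuous_on {0..1} b"
    and f: "f absolutely_integrable_on {0..1}"
  shows "AE x in lborel. x \<in> {0<..<1} \<longrightarrow>
           ((\<lambda>t. frac_int (1 - \<alpha>) (\<lambda>s u. 1 / a u) (frac_int \<alpha> K f) t)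
              has_real_derivative c_const \<alpha> * - (b x * f x)) (at x)"
proof -
  have bf: "(\<lambda>y. b y * f y) absolutely_integrable_on {0..1}"
  proof (rule absolutely_integrable_bounded_measurable_product_real[OF _ _ _ f])
    show "b \<in> borel_measurable (lebesgue_on {0..1})"
      by (rule continuous_imp_measurable_on_sets_lebesgue[OF b]) simp
    show "bounded (b ` {0..1})"
      by (rule compact_imp_bounded, rule compact_continuous_image[OF b]) simp
  qed simp
  show ?thesis
    using AE_has_real_derivative_integral[OF bf]
  proof (rule AE_mp, intro AE_I2 impI)
    fix x :: real assume x: "x \<in> {0<..<1}"
      and "x \<in> {0<..<1} \<longrightarrow> ((\<lambda>t. integral {t..1} (\<lambda>y. b y * f y)) has_real_derivative - (b x * f x)) (at x)"
    then have "((\<lambda>t. c_const \<alpha> * integral {t..1} (\<lambda>y. b y * f y))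
                 has_real_derivative c_const \<alpha> * - (b x * f x)) (at x)"
      by (intro DERIV_cmult) auto
    then show "((\<lambda>t. frac_int (1 - \<alpha>) (\<lambda>s u. 1 / a u) (frac_int \<alpha> K f) t)
                 has_real_derivative c_const \<alpha> * - (b x * f x)) (at x)"
    proof (rule has_field_derivative_transform_within_open[where S = "{0<..<1}"])
      show "c_const \<alpha> * integral {t..1} (\<lambda>y. b y * f y) =
              frac_int (1 - \<alpha>) (\<lambda>s u. 1 / a u) (frac_int \<alpha> K f) t" if "t \<in> {0<..<1}" for t
        using frac_int_complementary_composition[OF assms(1-4) bf] that by simp
    qed (use x in auto)
  qed
qed

lemma frac_int_AE_cong:
  assumes "AE x in lborel. x \<in> {0..1} \<longrightarrow> F x = G x" and "0 \<le> t"
  shows "frac_int \<beta> L F t = frac_int \<beta> L G t"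
proof -
  obtain N where N: "N \<in> null_sets lborel" "{x. \<not> (x \<in> {0..1} \<longrightarrow> F x = G x)} \<subseteq> N"
    using assms(1) by (auto elim!: AE_E simp: null_sets_def)
  then have "negligible N"
    by (simp add: negligible_iff_null_sets null_sets_completionI)
  then have "integral {t..1} (\<lambda>y. (y - t) powr (- \<beta>) * L t y * F y)
               = integral {t..1} (\<lambda>y. (y - t) powr (- \<beta>) * L t y * G y)"
  proof (rule integral_spike)
    show "(y - t) powr (- \<beta>) * L t y * G y = (y - t) powr (- \<beta>) * L t y * F y" if "y \<in> {t..1} - N" for y
    proof -
      have "y \<in> {0..1}" "y \<notin> N"
        using that assms(2) by auto
      then have "F y = G y"
        using N(2) by blast
      then show ?thesis by simp
    qed
  qed
  then show ?thesis
    by (simp add: frac_int_def)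
qed

lemma frac_int_injective:
  fixes K :: "real \<Rightarrow> real \<Rightarrow> real" and a b f g :: "real \<Rightarrow> real"
  assumes "0 < \<alpha>" "\<alpha> < 1"
    and "\<forall>(x, y) \<in> Delta. K x y = a x * b y"
    and "\<And>x. x \<in> {0..1} \<Longrightarrow> a x \<noteq> 0"
    and b: "continuous_on {0..1} b" "\<And>x. x \<in> {0..1} \<Longrightarrow> b x \<noteq> 0"
    and f: "f absolutely_integrable_on {0..1}" and g: "g absolutely_integrable_on {0..1}"
    and eq: "AE x in lborel. x \<in> {0..1} \<longrightarrow> frac_int \<alpha> K f x = frac_int \<alpha> K g x"
  shows "AE x in lborel. x \<in> {0..1} \<longrightarrow> f x = g x"
proof -
  define \<Phi> where "\<Phi> h t = frac_int (1 - \<alpha>) (\<lambda>s u. 1 / a u) (frac_int \<alpha> K h) t" for h t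
  have same: "\<Phi> f t = \<Phi> g t" if "t \<in> {0<..<1}" for t
    using frac_int_AE_cong[OF eq] that by (simp add: \<Phi>_def)
  have derivative: "AE x in lborel. x \<in> {0<..<1} \<longrightarrow>
      (\<Phi> h has_real_derivative c_const \<alpha> * - (b x * h x)) (at x)"
    if "h absolutely_integrable_on {0..1}" for h
    unfolding \<Phi>_def by (rule frac_int_composition_has_derivative) (use assms that in auto)
  have "AE x in lborel. x \<in> {0<..<1} \<longrightarrow> f x = g x"
    using derivative[OF f] derivative[OF g]
  proof eventually_elim
    case (elim x)
    show ?case
    proof
      assume x: "x \<in> {0<..<1}"
      have "(\<Phi> f has_real_derivative c_const \<alpha> * - (b x * g x)) (at x)"
        using elim(2)[rule_format, OF x]
        by (rule has_field_derivative_transform_within_open[where S = "{0<..<1}"]) (use same x in auto)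
      then have "c_const \<alpha> * - (b x * f x) = c_const \<alpha> * - (b x * g x)"
        using DERIV_unique elim(1) x by blast
      then show "f x = g x"
        using c_const_pos[OF assms(1,2)] b(2) x by simp
    qed
  qed
  moreover have "AE x in lborel. x \<noteq> 0" "AE x in lborel. x \<noteq> 1"
    by (rule AE_lborel_singleton)+
  ultimately show ?thesis
    by eventually_elim auto
qed

lemma separable_kernel_factors:
  fixes K :: "real \<Rightarrow> real \<Rightarrow> real" and a b :: "real \<Rightarrow> real"
  assumes K_cont: "continuous_on Delta (\<lambda>(x, y). K x y)"
    and K_nz: "\<forall>(x, y) \<in> Delta. K x y \<noteq> 0"
    and K: "\<forall>(x, y) \<in> Delta. K x y = a x * b y"
  shows "\<And>x. x \<in> {0..1} \<Longrightarrow> a x \<noteq> 0" "\<And>y. y \<in> {0..1} \<Longrightarrow> b y \<noteq> 0"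
    and "continuous_on {0..1} b"
proof -
  show a: "a x \<noteq> 0" if "x \<in> {0..1}" for x
    using that K_nz K by (force simp: Delta_def)
  show "b y \<noteq> 0" if "y \<in> {0..1}" for y
    using that K_nz K by (force simp: Delta_def)
  \<comment> \<open>\<open>b\<close> is the restriction of \<open>K\<close> to the edge \<open>x = 0\<close> of \<open>Delta\<close>, divided by \<open>a 0\<close>.\<close>
  have "continuous_on {0..1} (\<lambda>y. (\<lambda>(x, y). K x y) (0, y))"
    by (rule continuous_on_compose2[OF K_cont]) (auto intro!: continuous_intros simp: Delta_def)
  then have "continuous_on {0..1} (\<lambda>y. K 0 y / a 0)"
    by (intro continuous_intros) (use a[of 0] in auto)
  moreover have "K 0 y / a 0 = b y" if "y \<in> {0..1}" for y
    using that K a[of 0] by (auto simp: Delta_def)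
  ultimately show "continuous_on {0..1} b"
    using continuous_on_cong by (metis (no_types, lifting))
qed

lemma frac_int_inversion_formula:
  fixes K :: "real \<Rightarrow> real \<Rightarrow> real" and a b f :: "real \<Rightarrow> real"
  assumes "0 < \<alpha>" "\<alpha> < 1"
    and "\<forall>(x, y) \<in> Delta. K x y = a x * b y"
    and "\<And>x. x \<in> {0..1} \<Longrightarrow> a x \<noteq> 0"
    and b: "continuous_on {0..1} b" "\<And>x. x \<in> {0..1} \<Longrightarrow> b x \<noteq> 0"
    and "f absolutely_integrable_on {0..1}"
  shows "AE x in lborel. x \<in> {0<..<1} \<longrightarrow>
           (\<exists>D. ((\<lambda>t. frac_int (1 - \<alpha>) (\<lambda>s u. 1 / a u) (frac_int \<alpha> K f) t) has_real_derivative D) (at x)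
                \<and> f x = - (1 / b x) * (1 / c_const \<alpha>) * D)"
proof -
  have "AE x in lborel. x \<in> {0<..<1} \<longrightarrow>
      ((\<lambda>t. frac_int (1 - \<alpha>) (\<lambda>s u. 1 / a u) (frac_int \<alpha> K f) t)
         has_real_derivative c_const \<alpha> * - (b x * f x)) (at x)"
    by (rule frac_int_composition_has_derivative) (use assms in auto)
  then show ?thesis
  proof eventually_elim
    case (elim x)
    show ?case
    proof
      assume "x \<in> {0<..<1}"
      then have "f x = - (1 / b x) * (1 / c_const \<alpha>) * (c_const \<alpha> * - (b x * f x))"
        using b(2)[of x] c_const_pos[OF assms(1,2)] by simp
      then show "\<exists>D. ((\<lambda>t. frac_int (1 - \<alpha>) (\<lambda>s u. 1 / a u) (frac_int \<alpha> K f) t) has_real_derivative D) (at x)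
                 \<and> f x = - (1 / b x) * (1 / c_const \<alpha>) * D"
        using elim \<open>x \<in> {0<..<1}\<close> by (intro exI[of _ "c_const \<alpha> * - (b x * f x)"] conjI) simp_all
    qed
  qed
qed

theorem proposition2p5:
  fixes \<alpha> :: real and K :: "real \<Rightarrow> real \<Rightarrow> real" and a b :: "real \<Rightarrow> real"
  assumes "0 < \<alpha>" "\<alpha> < 1"
    and "continuous_on Delta (\<lambda>(x, y). K x y)"
    and "\<forall>(x, y) \<in> Delta. K x y \<noteq> 0"
    and "\<forall>(x, y) \<in> Delta. K x y = a x * b y"
  shows "(\<forall>f g. f absolutely_integrable_on {0..1} \<longrightarrow> g absolutely_integrable_on {0..1} \<longrightarrow>
            (AE x in lborel. x \<in> {0..1} \<longrightarrow> frac_int \<alpha> K f x = frac_int \<alpha> K g x) \<longrightarrow>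
            (AE x in lborel. x \<in> {0..1} \<longrightarrow> f x = g x))
       \<and> (\<forall>f. f absolutely_integrable_on {0..1} \<longrightarrow>
            (AE x in lborel. x \<in> {0<..<1} \<longrightarrow>
               (\<exists>D. ((\<lambda>t. frac_int (1 - \<alpha>) (\<lambda>s u. 1 / a u) (frac_int \<alpha> K f) t)
                        has_real_derivative D) (at x)
                    \<and> f x = - (1 / b x) * (1 / c_const \<alpha>) * D)))"
proof -
  note factors = separable_kernel_factors[OF assms(3-5)]
  show ?thesis
  proof (intro conjI allI impI)
    fix f g :: "real \<Rightarrow> real"
    assume fg: "f absolutely_integrable_on {0..1}" "g absolutely_integrable_on {0..1}"
      and eq: "AE x in lborel. x \<in> {0..1} \<longrightarrow> frac_int \<alpha> K f x = frac_int \<alpha> K g x"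
    show "AE x in lborel. x \<in> {0..1} \<longrightarrow> f x = g x"
      by (rule frac_int_injective[OF assms(1,2,5) _ factors(3) _ fg eq]) (fact factors)+
  next
    fix f :: "real \<Rightarrow> real"
    assume f: "f absolutely_integrable_on {0..1}"
    show "AE x in lborel. x \<in> {0<..<1} \<longrightarrow>
        (\<exists>D. ((\<lambda>t. frac_int (1 - \<alpha>) (\<lambda>s u. 1 / a u) (frac_int \<alpha> K f) t) has_real_derivative D) (at x)
             \<and> f x = - (1 / b x) * (1 / c_const \<alpha>) * D)"
      by (rule frac_int_inversion_formula[OF assms(1,2,5) _ factors(3) _ f]) (fact factors)+
  qed
qed

end
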